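(* Let $k$ be a commutative ring and $P$ an invertible $k$-module. Every $P$-Frobenius $k$-algebra $A$ is a QF algebra in the sense of Müller.
   Context: $P$ invertible means finitely generated projective of constant rank one. $A$ is $P$-Frobenius if it is finitely generated projective over $k$ and $A_A\cong\mathrm{Hom}_k(A,P)_A$ as right $A$-modules, where $(fa)(x)=f(ax)$. $A$ is QF in Müller's sense if it is finitely generated projective over $k$ and $A_A$ is isomorphic to a direct summand of a direct sum of $n$ copies of $A^*_A=\mathrm{Hom}_k(A,k)_A$ for some $n\ge1$. *)

theory Defs
  imports Complex_Main "HOL-Library.Function_Algebras"
begin

text \<open>Finitely generated projective: a direct summand of a free module k^n,
i.e. there is a k-linear split injection M -> k^n (with values supported in
indices below n) with a k-linear retraction.\<close>
definition fg_projective :: "('k::comm_ring_1 \<Rightarrow> 'm::ab_group_add \<Rightarrow> 'm) \<Rightarrow> bool" where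
  "fg_projective s \<longleftrightarrow> module s \<and>
     (\<exists>(n::nat) (i :: 'm::ab_group_add \<Rightarrow> nat \<Rightarrow> 'k::comm_ring_1) (p :: (nat \<Rightarrow> 'k) \<Rightarrow> 'm).
        module_hom s (\<lambda>c v j. c * v j) i \<and> module_hom (\<lambda>c v j. c * v j) s p \<and>
        (\<forall>m j. n \<le> j \<longrightarrow> i m j = 0) \<and> (\<forall>m. p (i m) = m))"

definition prime_ideal_of :: "'k::comm_ring_1 set \<Rightarrow> bool" where
  "prime_ideal_of I \<longleftrightarrow> 0 \<in> I \<and> (\<forall>a\<in>I. \<forall>b\<in>I. a + b \<in> I) \<and>
     (\<forall>a\<in>I. \<forall>r. r * a \<in> I) \<and> 1 \<notin> I \<and>
     (\<forall>a b. a * b \<in> I \<longrightarrow> a \<in> I \<or> b \<in> I)"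

text \<open>M_p is free of rank one over k_p (localisation at the prime p), written
out without constructing the localisation: there is x in M whose image x/1
generates M_p and has annihilator zero in k_p.\<close>
definition locally_rank_one_at ::
  "('k::comm_ring_1 \<Rightarrow> 'm::ab_group_add \<Rightarrow> 'm) \<Rightarrow> 'k set \<Rightarrow> bool" where
  "locally_rank_one_at s I \<longleftrightarrow>
     (\<exists>x. (\<forall>m. \<exists>t. t \<notin> I \<and> (\<exists>c. s t m = s c x)) \<and>
          (\<forall>c. s c x = 0 \<longrightarrow> (\<exists>v. v \<notin> I \<and> v * c = 0)))"

definition invertible_module :: "('k::comm_ring_1 \<Rightarrow> 'm::ab_group_add \<Rightarrow> 'm) \<Rightarrow> bool" where
  "invertible_module s \<longleftrightarrow> fg_projective s \<and>
     (\<forall>I. prime_ideal_of I \<longrightarrow> locally_rank_one_at s I)"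

definition k_algebra :: "('k::comm_ring_1 \<Rightarrow> 'a::ring_1 \<Rightarrow> 'a) \<Rightarrow> bool" where
  "k_algebra s \<longleftrightarrow> module s \<and>
     (\<forall>c x y. s c (x * y) = s c x * y \<and> s c (x * y) = x * s c y)"

text \<open>A is P-Frobenius: A f.g. projective over k and A_A isomorphic to
Hom_k(A,P)_A as right A-modules, where (f a)(x) = f (a x).\<close>
definition P_Frobenius ::
  "('k::comm_ring_1 \<Rightarrow> 'a::ring_1 \<Rightarrow> 'a) \<Rightarrow> ('k \<Rightarrow> 'p::ab_group_add \<Rightarrow> 'p) \<Rightarrow> bool" where
  "P_Frobenius sA sP \<longleftrightarrow> fg_projective sA \<and>
     (\<exists>\<phi> :: 'a::ring_1 \<Rightarrow> ('a \<Rightarrow> 'p::ab_group_add).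
        bij_betw \<phi> UNIV {f. module_hom sA sP f} \<and>
        (\<forall>x y. \<phi> (x + y) = (\<lambda>z. \<phi> x z + \<phi> y z)) \<and>
        (\<forall>x b. \<phi> (x * b) = (\<lambda>z. \<phi> x (b * z))))"

definition dual_space :: "('k::comm_ring_1 \<Rightarrow> 'a::ab_group_add \<Rightarrow> 'a) \<Rightarrow> ('a \<Rightarrow> 'k) set" where
  "dual_space sA = {f. module_hom sA ((*) :: 'k::comm_ring_1 \<Rightarrow> 'k \<Rightarrow> 'k) f}"

text \<open>Elements of the direct sum (A^* )^n, as n-indexed families (zero beyond n).\<close>
definition dual_sum :: "('k::comm_ring_1 \<Rightarrow> 'a::ab_group_add \<Rightarrow> 'a) \<Rightarrow> nat \<Rightarrow> (nat \<Rightarrow> 'a \<Rightarrow> 'k) set" where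
  "dual_sum sA n = {F. (\<forall>j<n. F j \<in> dual_space sA) \<and> (\<forall>j. n \<le> j \<longrightarrow> F j = 0)}"

text \<open>QF in Mueller's sense: A f.g. projective over k and A_A isomorphic to a
direct summand of (A^* )^n as right A-modules for some n >= 1, i.e. there is a
right A-linear split injection i : A -> (A^* )^n with right A-linear retraction p.
Right action on (A^* )^n: (F b) j = (\<lambda>x. F j (b * x)).\<close>
definition QF_Mueller :: "('k::comm_ring_1 \<Rightarrow> 'a::ring_1 \<Rightarrow> 'a) \<Rightarrow> bool" where
  "QF_Mueller sA \<longleftrightarrow> fg_projective sA \<and>
     (\<exists>(n::nat) (i :: 'a::ring_1 \<Rightarrow> nat \<Rightarrow> 'a \<Rightarrow> 'k::comm_ring_1) (p :: (nat \<Rightarrow> 'a \<Rightarrow> 'k) \<Rightarrow> 'a).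
        1 \<le> n \<and>
        (\<forall>a. i a \<in> dual_sum sA n) \<and>
        (\<forall>a a'. i (a + a') = (\<lambda>j x. i a j x + i a' j x)) \<and>
        (\<forall>a b. i (a * b) = (\<lambda>j x. i a j (b * x))) \<and>
        (\<forall>F\<in>dual_sum sA n. \<forall>G\<in>dual_sum sA n. p (\<lambda>j x. F j x + G j x) = p F + p G) \<and>
        (\<forall>F\<in>dual_sum sA n. \<forall>b. p (\<lambda>j x. F j (b * x)) = p F * b) \<and>
        (\<forall>a. p (i a) = a))"

end

theory Submission
  imports Defs
begin

text \<open>A P-Frobenius isomorphism identifies A_A with Hom_k(A,P). Since P is a direct summand of k^n,
Hom_k(A,P) is a direct summand of Hom_k(A,k^n) = (A^* )^n, compatibly with the right A-actions, which
only act on the argument.\<close>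

lemma module_mult_self: "module ((*) :: 'k::comm_ring_1 \<Rightarrow> 'k \<Rightarrow> 'k)"
  by unfold_locales (auto simp: algebra_simps)

lemma module_pointwise_mult: "module (\<lambda>c (v :: 'i \<Rightarrow> 'k::comm_ring_1) j. c * v j)"
  by unfold_locales (auto simp: algebra_simps fun_eq_iff)

lemma module_hom_pointwise_iff:
  fixes s :: "'k::comm_ring_1 \<Rightarrow> 'm::ab_group_add \<Rightarrow> 'm"
  assumes "module s"
  shows "module_hom s (\<lambda>c v j. c * v j) (\<lambda>x j. F j x) \<longleftrightarrow> (\<forall>j. module_hom s (*) (F j))"
  using assms by (auto simp: module_hom_iff module_mult_self module_pointwise_mult fun_eq_iff)

lemma dual_sum_iff_module_hom:
  assumes "module s"
  shows "F \<in> dual_sum s n \<longleftrightarrow>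
    module_hom s (\<lambda>c v j. c * v j) (\<lambda>x j. F j x) \<and> (\<forall>j. n \<le> j \<longrightarrow> F j = 0)"
proof -
  have "module_hom s (*) 0"
    unfolding zero_fun_def using assms module_mult_self
    by (rule module_pair.module_hom_zero[OF module_pair.intro])
  then have "(\<forall>j<n. module_hom s (*) (F j)) \<and> (\<forall>j\<ge>n. F j = 0) \<longleftrightarrow>
      (\<forall>j. module_hom s (*) (F j)) \<and> (\<forall>j\<ge>n. F j = 0)"
    by (metis not_le)
  then show ?thesis
    using assms by (simp add: dual_sum_def dual_space_def module_hom_pointwise_iff)
qed

lemma comp_module_hom_in_dual_sum:
  assumes "module s" and "module_hom s sP f" and "module_hom sP (\<lambda>c v j. c * v j) \<iota>"
    and "\<And>m j. n \<le> j \<Longrightarrow> \<iota> m j = 0"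
  shows "(\<lambda>j x. \<iota> (f x) j) \<in> dual_sum s n"
  using module_hom_compose[OF assms(2,3)] assms(1,4)
  by (simp add: dual_sum_iff_module_hom o_def fun_eq_iff)

lemma module_hom_comp_dual_sum:
  assumes "module s" and "F \<in> dual_sum s n" and "module_hom (\<lambda>c v j. c * v j) sP \<pi>"
  shows "module_hom s sP (\<lambda>x. \<pi> (\<lambda>j. F j x))"
  using module_hom_compose[OF _ assms(3)] assms(1,2) by (auto simp: dual_sum_iff_module_hom o_def)

lemma inv_bij_betw_add:
  assumes "bij_betw \<phi> UNIV H" and "\<And>x y. \<phi> (x + y) = (\<lambda>z. \<phi> x z + \<phi> y z)"
    and "f \<in> H" "g \<in> H"
  shows "inv \<phi> (\<lambda>z. f z + g z) = inv \<phi> f + inv \<phi> g"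
  using assms by (intro inv_f_eq) (auto simp: bij_betw_def f_inv_into_f)

lemma inv_bij_betw_mult:
  assumes "bij_betw \<phi> UNIV H" and "\<And>x b. \<phi> (x * b) = (\<lambda>z. \<phi> x (b * z))"
    and "f \<in> H"
  shows "inv \<phi> (\<lambda>z. f (b * z)) = inv \<phi> f * b"
  using assms by (intro inv_f_eq) (auto simp: bij_betw_def f_inv_into_f)

theorem proposition2p3:
  fixes sA :: "'k::comm_ring_1 \<Rightarrow> 'a::ring_1 \<Rightarrow> 'a"
    and sP :: "'k \<Rightarrow> 'p::ab_group_add \<Rightarrow> 'p"
  assumes "k_algebra sA"
    and "invertible_module sP"
    and "P_Frobenius sA sP"
  shows "QF_Mueller sA"
proof -
  have fgA: "fg_projective sA" and modA: "module sA"
    using assms(3) by (auto simp: P_Frobenius_def fg_projective_def)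
  obtain \<phi> :: "'a \<Rightarrow> 'a \<Rightarrow> 'p" where bij: "bij_betw \<phi> UNIV {f. module_hom sA sP f}"
    and \<phi>_add: "\<And>x y. \<phi> (x + y) = (\<lambda>z. \<phi> x z + \<phi> y z)"
    and \<phi>_mult: "\<And>x b. \<phi> (x * b) = (\<lambda>z. \<phi> x (b * z))"
    using assms(3) unfolding P_Frobenius_def by blast
  obtain n and \<iota> :: "'p \<Rightarrow> nat \<Rightarrow> 'k" and \<pi> :: "(nat \<Rightarrow> 'k) \<Rightarrow> 'p" where
    \<iota>_hom: "module_hom sP (\<lambda>c v j. c * v j) \<iota>" and \<pi>_hom: "module_hom (\<lambda>c v j. c * v j) sP \<pi>"
    and \<iota>_supp: "\<And>m j. n \<le> j \<Longrightarrow> \<iota> m j = 0" and \<pi>_\<iota>: "\<And>m. \<pi> (\<iota> m) = m"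
    using assms(2) unfolding invertible_module_def fg_projective_def by blast
  \<comment> \<open>The bound is raised to Suc n since n may be 0, while QF demands at least one summand.\<close>
  define i where "i a = (\<lambda>j x. \<iota> (\<phi> a x) j)" for a
  define p where "p F = inv \<phi> (\<lambda>x. \<pi> (\<lambda>j. F j x))" for F :: "nat \<Rightarrow> 'a \<Rightarrow> 'k"
  have i_mem: "i a \<in> dual_sum sA (Suc n)" for a
    using bij \<iota>_supp unfolding i_def
    by (intro comp_module_hom_in_dual_sum[OF modA _ \<iota>_hom]) (auto simp: bij_betw_def)
  have \<pi>_mem: "(\<lambda>x. \<pi> (\<lambda>j. F j x)) \<in> {f. module_hom sA sP f}" if "F \<in> dual_sum sA (Suc n)" for F
    using module_hom_comp_dual_sum[OF modA that \<pi>_hom] by simp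
  have \<pi>_add: "\<pi> (\<lambda>j. F j x + G j x) = \<pi> (\<lambda>j. F j x) + \<pi> (\<lambda>j. G j x)"
    for F G :: "nat \<Rightarrow> 'a \<Rightarrow> 'k" and x
    using module_hom.add[OF \<pi>_hom] by (simp add: plus_fun_def)
  have \<iota>_add: "\<iota> (m + m') j = \<iota> m j + \<iota> m' j" for m m' j
    using module_hom.add[OF \<iota>_hom] by (simp add: plus_fun_def)
  have p_add: "p (\<lambda>j x. F j x + G j x) = p F + p G"
    if "F \<in> dual_sum sA (Suc n)" "G \<in> dual_sum sA (Suc n)" for F G
    using inv_bij_betw_add[OF bij \<phi>_add \<pi>_mem \<pi>_mem, OF that] by (simp add: p_def \<pi>_add)
  have p_mult: "p (\<lambda>j x. F j (b * x)) = p F * b" if "F \<in> dual_sum sA (Suc n)" for F b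
    using inv_bij_betw_mult[OF bij \<phi>_mult \<pi>_mem, OF that] by (simp add: p_def)
  have p_i: "p (i a) = a" for a
    using bij by (simp add: p_def i_def \<pi>_\<iota> bij_betw_def)
  show ?thesis
    unfolding QF_Mueller_def using fgA i_mem p_add p_mult p_i
    by (intro conjI exI[of _ "Suc n"] exI[of _ i] exI[of _ p])
      (auto simp: i_def \<phi>_add \<phi>_mult \<iota>_add)
qed

end
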